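(* Let $\theta\in\mathbb{R}^d$ parameterize a differentiable model with success probability $P_\theta\in(0,1]$ and score $s(\theta)\triangleq\nabla_\theta\log P_\theta$. Fix $q\in[0,1]$, a target $\delta\in(0,1/2]$ and a constant $C>0$. For $p_0\in(0,\delta)$, let $\theta(t)$ be a solution of the gradient flow $\dot\theta=-\nabla_\theta\ell_q(\theta)$ with $P_{\theta(0)}=p_0$, and suppose $\|s(\theta(t))\|\le C$ for all $t\ge0$. Let $T_q(p_0,\delta)\triangleq\inf\{t\ge0: P_{\theta(t)}\ge\delta\}$. Then $$T_q(p_0,\delta)\ \ge\ \frac{1}{C^2}\int_{p_0}^{\delta}u^{-(2-q)}\,du,$$ and consequently, as $p_0\to0$ (with $q,\delta,C$ fixed), $T_q(p_0,\delta)=\Omega\!\left(\frac{p_0^{-(1-q)}}{1-q}\right)$ for $q\in[0,1)$ and $T_1(p_0,\delta)=\Omega\!\left(\log\frac1{p_0}\right)$.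
   Context: The Tsallis $q$-logarithm is $\log_q(u)=\frac{u^{1-q}-1}{1-q}$ ($q<1$), $\log_1(u)=\log u$, and $\ell_q(\theta)\triangleq-\log_q P_\theta$. *)

theory Defs
  imports "HOL-Analysis.Analysis"
begin

definition tlog :: "real \<Rightarrow> real \<Rightarrow> real" where
  "tlog q u = (if q = 1 then ln u else (u powr (1 - q) - 1) / (1 - q))"

definition grad :: "('a::euclidean_space \<Rightarrow> real) \<Rightarrow> 'a \<Rightarrow> 'a" where
  "grad f x = (\<Sum>b\<in>Basis. frechet_derivative f (at x) b *\<^sub>R b)"

definition tloss :: "real \<Rightarrow> ('a \<Rightarrow> real) \<Rightarrow> 'a \<Rightarrow> real" where
  "tloss q P x = - tlog q (P x)"

text \<open>Hitting time T = inf {t >= 0. P(theta t) >= delta}, in the extended reals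
  (infimum of the empty set is +infinity).\<close>
definition hit_time :: "('a \<Rightarrow> real) \<Rightarrow> (real \<Rightarrow> 'a) \<Rightarrow> real \<Rightarrow> ereal" where
  "hit_time P \<theta> \<delta> = Inf (ereal ` {t. 0 \<le> t \<and> \<delta> \<le> P (\<theta> t)})"

definition flow_ok :: "real \<Rightarrow> ('a::euclidean_space \<Rightarrow> real) \<Rightarrow> real \<Rightarrow> real \<Rightarrow> (real \<Rightarrow> 'a) \<Rightarrow> bool" where
  "flow_ok q P C p0 \<theta> \<longleftrightarrow>
     (\<forall>t\<ge>0. (\<theta> has_vector_derivative (- grad (tloss q P) (\<theta> t))) (at t within {0..}))
     \<and> P (\<theta> 0) = p0
     \<and> (\<forall>t\<ge>0. norm (grad (\<lambda>x. ln (P x)) (\<theta> t)) \<le> C)"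

end

theory Submission
  imports Defs "HOL-Real_Asymp.Real_Asymp"
begin

(* Along the flow, with the tempered potential V(t) = log_(2-q) P(theta t), the chain rule and
   grad ell_q = -P^(-q) grad P give V' = P^(q-2) P^(-q) |grad P|^2 = |s(theta t)|^2 <= C^2.
   Hence V grows at most linearly, and reaching P >= delta from P = p0 takes time at least
   (log_(2-q) delta - log_(2-q) p0) / C^2, which is the integral of u^(-(2-q)) from p0 to delta.
   As p0 -> 0 this gap behaves like p0^(-(1-q))/(1-q) for q < 1 and like ln(1/p0) for q = 1. *)

lemma has_derivative_grad:
  fixes f :: "'a::euclidean_space \<Rightarrow> real"
  assumes "f differentiable (at x)"
  shows "(f has_derivative (\<lambda>v. v \<bullet> grad f x)) (at x)"
proof -
  let ?D = "frechet_derivative f (at x)"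
  have deriv: "(f has_derivative ?D) (at x)"
    using assms frechet_derivative_works by blast
  then have "linear ?D"
    using has_derivative_linear by blast
  then have "?D v = v \<bullet> grad f x" for v
    using Linear_Algebra.linear_componentwise[of ?D v 1]
    by (simp add: grad_def inner_sum_right mult.commute)
  then have "?D = (\<lambda>v. v \<bullet> grad f x)"
    by (rule ext)
  with deriv show ?thesis
    by simp
qed

lemma grad_eqI:
  fixes f :: "'a::euclidean_space \<Rightarrow> real"
  assumes "(f has_derivative (\<lambda>v. v \<bullet> g)) (at x)"
  shows "grad f x = g"
proof -
  have "frechet_derivative f (at x) = (\<lambda>v. v \<bullet> g)"
    using frechet_derivative_at[OF assms] by simp
  then show ?thesis
    using euclidean_representation[of g] by (simp add: grad_def inner_commute)
qed

lemma grad_compose_real: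
  fixes f :: "'a::euclidean_space \<Rightarrow> real"
  assumes "f differentiable (at x)" and "(h has_real_derivative h') (at (f x))"
  shows "grad (\<lambda>y. h (f y)) x = h' *\<^sub>R grad f x"
  using DERIV_compose_FDERIV[OF assms(2) has_derivative_grad[OF assms(1)]]
  by (intro grad_eqI) (simp add: mult.commute)

lemma tlog_has_real_derivative:
  assumes "0 < u"
  shows "(tlog q has_real_derivative u powr (-q)) (at u)"
proof (cases "q = 1")
  case True
  then have "tlog q = ln"
    by (simp add: tlog_def fun_eq_iff)
  with True assms show ?thesis
    by (auto intro!: derivative_eq_intros simp: powr_minus_divide)
next
  case False
  then have tlog_eq: "tlog q = (\<lambda>u. (u powr (1 - q) - 1) / (1 - q))"
    by (simp add: tlog_def fun_eq_iff)
  have "((\<lambda>u. (u powr (1 - q) - 1) / (1 - q)) has_real_derivative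
      (1 - q) * u powr (1 - q - 1) / (1 - q)) (at u)"
    using assms by (auto intro!: derivative_eq_intros)
  with False show ?thesis
    unfolding tlog_eq by simp
qed

lemma tlog_mono:
  assumes "0 < a" and "a \<le> b"
  shows "tlog q a \<le> tlog q b"
proof (rule DERIV_nonneg_imp_nondecreasing[OF assms(2)])
  fix x assume "a \<le> x"
  with assms(1) have "0 < x" by simp
  then show "\<exists>y. (tlog q has_real_derivative y) (at x) \<and> 0 \<le> y"
    using tlog_has_real_derivative powr_ge_zero by blast
qed

lemma integral_powr_eq_tlog_diff:
  assumes "0 < a" and "a \<le> b"
  shows "integral {a..b} (\<lambda>u. u powr (-q)) = tlog q b - tlog q a"
proof (rule integral_unique, rule fundamental_theorem_of_calculus[OF assms(2)])
  fix u assume "u \<in> {a..b}"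
  with assms have "0 < u" by simp
  then show "(tlog q has_vector_derivative u powr (-q)) (at u within {a..b})"
    using tlog_has_real_derivative has_real_derivative_iff_has_vector_derivative
      has_vector_derivative_at_within by blast
qed

lemma tlog_two_minus:
  assumes "q < 1"
  shows "tlog (2 - q) p = (1 - p powr -(1 - q)) / (1 - q)"
  using assms by (simp add: tlog_def divide_simps) (simp add: algebra_simps)

lemma increment_le_of_derivative_le:
  fixes f :: "real \<Rightarrow> real"
  assumes "a \<le> b"
    and deriv: "\<And>x. a \<le> x \<Longrightarrow> x \<le> b \<Longrightarrow> (f has_real_derivative f' x) (at x within {a..b})"
    and bound: "\<And>x. a \<le> x \<Longrightarrow> x \<le> b \<Longrightarrow> f' x \<le> B"
  shows "f b - f a \<le> B * (b - a)"
proof (cases "a = b")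
  case False
  with assms(1) have "a < b" by simp
  then obtain x where x: "x \<in> {a<..<b}" "f b - f a = f' x * (b - a)"
    using mvt_simple[of a b f "\<lambda>x. (*) (f' x)"] deriv[unfolded has_field_derivative_def]
    by auto
  with bound[of x] \<open>a < b\<close> show ?thesis
    by (simp add: mult_right_mono)
qed simp

lemma has_real_derivative_tlog_along_flow:
  fixes P :: "'a::euclidean_space \<Rightarrow> real"
  assumes P_diff: "P differentiable (at (\<theta> t))" and P_pos: "0 < P (\<theta> t)"
    and flow: "(\<theta> has_vector_derivative - grad (tloss q P) (\<theta> t)) (at t within S)"
  shows "((\<lambda>t. tlog (2 - q) (P (\<theta> t))) has_real_derivative
           (norm (grad (\<lambda>x. ln (P x)) (\<theta> t)))\<^sup>2) (at t within S)"
proof -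
  let ?p = "P (\<theta> t)" and ?g = "grad P (\<theta> t)"
  have "grad (tloss q P) (\<theta> t) = - (?p powr (-q)) *\<^sub>R ?g"
    using grad_compose_real[OF P_diff DERIV_minus[OF tlog_has_real_derivative[OF P_pos]]]
    by (simp add: tloss_def[abs_def])
  with flow have "(\<theta> has_vector_derivative (?p powr (-q)) *\<^sub>R ?g) (at t within S)"
    by simp
  from vector_derivative_diff_chain_within[OF this
      has_derivative_at_withinI[OF has_derivative_grad[OF P_diff]]]
  have "((\<lambda>t. P (\<theta> t)) has_real_derivative ?p powr (-q) * (?g \<bullet> ?g)) (at t within S)"
    by (simp add: has_real_derivative_iff_has_vector_derivative o_def)
  from DERIV_chain2[OF tlog_has_real_derivative[OF P_pos] this]
  have "((\<lambda>t. tlog (2 - q) (P (\<theta> t))) has_real_derivative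
          ?p powr (-(2 - q)) * (?p powr (-q) * (?g \<bullet> ?g))) (at t within S)" .
  moreover have "?p powr (-(2 - q)) * ?p powr (-q) = inverse (?p\<^sup>2)"
  proof -
    have "?p powr (-(2 - q)) * ?p powr (-q) = ?p powr (-(2 - q) + -q)"
      by (rule powr_add[symmetric])
    also have "\<dots> = inverse (?p\<^sup>2)"
      using P_pos by (simp add: powr_minus powr_numeral)
    finally show ?thesis .
  qed
  moreover have "grad (\<lambda>x. ln (P x)) (\<theta> t) = inverse ?p *\<^sub>R ?g"
    using grad_compose_real[OF P_diff DERIV_ln[OF P_pos]] .
  ultimately show ?thesis
    by (simp add: power2_norm_eq_inner power_mult_distrib power_inverse mult.assoc[symmetric])
qed

lemma hit_time_geI:
  assumes "\<And>t. 0 \<le> t \<Longrightarrow> \<delta> \<le> P (\<theta> t) \<Longrightarrow> T \<le> t"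
  shows "ereal T \<le> hit_time P \<theta> \<delta>"
  using assms unfolding hit_time_def by (auto intro!: Inf_greatest)

lemma hit_time_ge_tlog_gap:
  fixes P :: "'a::euclidean_space \<Rightarrow> real"
  assumes P_diff: "\<And>x. P differentiable (at x)" and P_pos: "\<And>x. 0 < P x"
    and flow: "flow_ok q P C p0 \<theta>" and C: "0 < C" and \<delta>: "0 < \<delta>"
  shows "ereal ((tlog (2 - q) \<delta> - tlog (2 - q) p0) / C\<^sup>2) \<le> hit_time P \<theta> \<delta>"
proof (rule hit_time_geI)
  fix t :: real assume t: "0 \<le> t" "\<delta> \<le> P (\<theta> t)"
  define V where "V s = tlog (2 - q) (P (\<theta> s))" for s
  have "V t - V 0 \<le> C\<^sup>2 * (t - 0)"
  proof (rule increment_le_of_derivative_le[OF t(1)])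
    fix s assume "0 \<le> s" "s \<le> t"
    with flow have "(\<theta> has_vector_derivative - grad (tloss q P) (\<theta> s)) (at s within {0..})"
      by (simp add: flow_ok_def)
    from has_real_derivative_tlog_along_flow[OF P_diff P_pos this]
    show "(V has_real_derivative (norm (grad (\<lambda>x. ln (P x)) (\<theta> s)))\<^sup>2) (at s within {0..t})"
      unfolding V_def by (rule has_field_derivative_subset) auto
    from \<open>0 \<le> s\<close> flow show "(norm (grad (\<lambda>x. ln (P x)) (\<theta> s)))\<^sup>2 \<le> C\<^sup>2"
      by (intro power_mono) (auto simp: flow_ok_def)
  qed
  moreover have "V 0 = tlog (2 - q) p0"
    using flow by (simp add: V_def flow_ok_def)
  moreover have "tlog (2 - q) \<delta> \<le> V t"
    unfolding V_def using \<delta> t(2) by (rule tlog_mono)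
  ultimately show "(tlog (2 - q) \<delta> - tlog (2 - q) p0) / C\<^sup>2 \<le> t"
    using C by (simp add: divide_le_eq mult.commute)
qed

lemma hit_time_asymptotic_lower_bound:
  fixes P :: "'a::euclidean_space \<Rightarrow> real"
  assumes P_diff: "\<And>x. P differentiable (at x)" and P_pos: "\<And>x. 0 < P x"
    and C: "0 < C" and \<delta>: "0 < \<delta>"
    and g: "filterlim g at_top (at_right 0)"
    and gap: "\<And>p. 0 < p \<Longrightarrow> tlog (2 - q) \<delta> - tlog (2 - q) p = K + g p"
  shows "\<exists>c>0. \<forall>\<^sub>F p0 in at_right 0. \<forall>\<theta> :: real \<Rightarrow> 'a.
           flow_ok q P C p0 \<theta> \<longrightarrow> hit_time P \<theta> \<delta> \<ge> ereal (c * g p0)"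
proof (intro exI conjI)
  show "0 < 1 / (2 * C\<^sup>2)"
    using C by simp
  have "\<forall>\<^sub>F p in at_right 0. - 2 * K \<le> g p"
    using g by (simp add: filterlim_at_top)
  moreover have "\<forall>\<^sub>F p in at_right (0::real). 0 < p"
    by (simp add: eventually_at_right_less)
  ultimately show "\<forall>\<^sub>F p0 in at_right 0. \<forall>\<theta> :: real \<Rightarrow> 'a.
      flow_ok q P C p0 \<theta> \<longrightarrow> hit_time P \<theta> \<delta> \<ge> ereal (1 / (2 * C\<^sup>2) * g p0)"
  proof eventually_elim
    case (elim p0)
    then have "1 / (2 * C\<^sup>2) * g p0 \<le> (tlog (2 - q) \<delta> - tlog (2 - q) p0) / C\<^sup>2"
      using C gap by (simp add: field_simps)
    then show ?case
      using hit_time_ge_tlog_gap[OF P_diff P_pos _ C \<delta>] order_trans ereal_less_eq(3) by blast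
  qed
qed

theorem mainTheorem7:
  fixes P :: "real ^ 'd \<Rightarrow> real" and q \<delta> C :: real
  assumes P_diff: "\<And>x. P differentiable (at x)"
    and P_range: "\<And>x. 0 < P x \<and> P x \<le> 1"
    and q: "0 \<le> q" "q \<le> 1"
    and \<delta>: "0 < \<delta>" "\<delta> \<le> 1/2"
    and C: "0 < C"
  shows "(\<forall>p0 (\<theta> :: real \<Rightarrow> real ^ 'd). 0 < p0 \<and> p0 < \<delta> \<and> flow_ok q P C p0 \<theta> \<longrightarrow>
            hit_time P \<theta> \<delta> \<ge> ereal (1 / C\<^sup>2 * integral {p0..\<delta>} (\<lambda>u. u powr (-(2 - q)))))
       \<and> (q < 1 \<longrightarrow> (\<exists>c>0. \<forall>\<^sub>F p0 in at_right 0. \<forall>\<theta> :: real \<Rightarrow> real ^ 'd.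
            flow_ok q P C p0 \<theta> \<longrightarrow> hit_time P \<theta> \<delta> \<ge> ereal (c * (p0 powr (-(1 - q)) / (1 - q)))))
       \<and> (q = 1 \<longrightarrow> (\<exists>c>0. \<forall>\<^sub>F p0 in at_right 0. \<forall>\<theta> :: real \<Rightarrow> real ^ 'd.
            flow_ok q P C p0 \<theta> \<longrightarrow> hit_time P \<theta> \<delta> \<ge> ereal (c * ln (1 / p0))))"
proof (intro conjI impI allI)
  fix p0 and \<theta> :: "real \<Rightarrow> real ^ 'd"
  assume "0 < p0 \<and> p0 < \<delta> \<and> flow_ok q P C p0 \<theta>"
  then show "hit_time P \<theta> \<delta> \<ge> ereal (1 / C\<^sup>2 * integral {p0..\<delta>} (\<lambda>u. u powr (-(2 - q))))"
    using hit_time_ge_tlog_gap[OF P_diff P_range[THEN conjunct1] _ C \<delta>(1)]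
      integral_powr_eq_tlog_diff[of p0 \<delta> "2 - q"]
    by simp
next
  assume "q < 1"
  then have "filterlim (\<lambda>p::real. p powr -(1 - q) / (1 - q)) at_top (at_right 0)"
    by real_asymp
  with \<open>q < 1\<close> show "\<exists>c>0. \<forall>\<^sub>F p0 in at_right 0. \<forall>\<theta> :: real \<Rightarrow> real ^ 'd.
      flow_ok q P C p0 \<theta> \<longrightarrow> hit_time P \<theta> \<delta> \<ge> ereal (c * (p0 powr (-(1 - q)) / (1 - q)))"
    by (intro hit_time_asymptotic_lower_bound[OF P_diff P_range[THEN conjunct1] C \<delta>(1),
          where K = "tlog (2 - q) \<delta> - 1 / (1 - q)"])
      (simp_all add: tlog_two_minus[of q] diff_divide_distrib)
next
  have "filterlim (\<lambda>p::real. ln (1 / p)) at_top (at_right 0)"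
    by real_asymp
  moreover assume "q = 1"
  ultimately show "\<exists>c>0. \<forall>\<^sub>F p0 in at_right 0. \<forall>\<theta> :: real \<Rightarrow> real ^ 'd.
      flow_ok q P C p0 \<theta> \<longrightarrow> hit_time P \<theta> \<delta> \<ge> ereal (c * ln (1 / p0))"
    by (intro hit_time_asymptotic_lower_bound[OF P_diff P_range[THEN conjunct1] C \<delta>(1),
          where K = "ln \<delta>"])
      (simp_all add: tlog_def ln_div)
qed

end
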